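(* Let $(X,\mathbb{A},d)$ be a complete $C^*$-algebra valued metric space, where $\mathbb{A}$ is a unital $C^*$-algebra. Let $T,S:X\to X$ be mappings such that $$d(T^n x,S^n y)\preceq q(x,y)^n\,\delta(x,y)\quad\text{for all }x,y\in X,\ n\in\mathbb{N},$$ where $q:X\times X\to\acute{\mathbb{A}}_+$ satisfies $0\le\|q(x,y)\|<1$ for all $x,y\in X$ and $\delta:X\times X\to\mathbb{A}_+$ is a mapping. Then $T$ and $S$ are both orbitally continuous on $X$ if and only if $T$ and $S$ have a unique common fixed point in $X$.
   Context: $\mathbb{A}$ denotes a unital $C^*$-algebra with unit $I$ and zero $\theta$. An element $a\in\mathbb{A}$ is positive, written $a\succeq\theta$, if $a^*=a$ and its spectrum is contained in $[0,\infty)$; $\mathbb{A}_+$ is the set of positive elements, and $a\succeq b$ means $a-b\succeq\theta$. $\acute{\mathbb{A}}_+$ denotes the set of positive elements of $\mathbb{A}$ that commute with every element of $\mathbb{A}$. A $C^*$-algebra valued metric space $(X,\mathbb{A},d)$ is a nonempty set $X$ with $d:X\times X\to\mathbb{A}$ such that for all $x,y,z\in X$: $d(x,y)\succeq\theta$, with $d(x,y)=\theta$ iff $x=y$; $d(x,y)=d(y,x)$; $d(x,y)\preceq d(x,z)+d(z,y)$. A sequence $\{x_n\}$ converges to $x$ if $\|d(x_n,x)\|\to0$, and is Cauchy if $\|d(x_n,x_m)\|\to0$ as $n,m\to\infty$; the space is complete if every Cauchy sequence converges to a point of $X$. A self-map $T$ of $X$ is orbitally continuous at $u\in X$ if for every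 $x\in X$ and every increasing sequence of positive integers $\{n_i\}$, $\|d(T^{n_i}x,u)\|\to0$ implies $\|d(T^{n_i+1}x,Tu)\|\to0$ as $i\to\infty$; $T$ is orbitally continuous on $X$ if it is orbitally continuous at every $u\in X$. *)

theory Defs
  imports Complex_Main
begin

text \<open>A unital C*-algebra: a type 'a that is a real Banach algebra with unit (norm 1 = 1),
 together with an explicit complex scalar action sc extending the real one and an involution st.\<close>

definition unital_cstar_algebra :: "(complex \<Rightarrow> 'a::{real_normed_algebra_1,banach} \<Rightarrow> 'a) \<Rightarrow> ('a \<Rightarrow> 'a) \<Rightarrow> bool"
  where "unital_cstar_algebra sc st \<longleftrightarrow>
    (\<forall>(r::real) (x::'a). sc (complex_of_real r) x = scaleR r x) \<and>
    (\<forall>c d x. sc (c + d) x = sc c x + sc d x) \<and>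
    (\<forall>c x y. sc c (x + y) = sc c x + sc c y) \<and>
    (\<forall>c d x. sc (c * d) x = sc c (sc d x)) \<and>
    (\<forall>c x y. sc c (x * y) = sc c x * y \<and> sc c (x * y) = x * sc c y) \<and>
    (\<forall>c x. norm (sc c x) = cmod c * norm x) \<and>
    (\<forall>x y. st (x + y) = st x + st y) \<and>
    (\<forall>c x. st (sc c x) = sc (cnj c) (st x)) \<and>
    (\<forall>x y. st (x * y) = st y * st x) \<and>
    (\<forall>x. st (st x) = x) \<and>
    (\<forall>x. norm (st x * x) = norm x ^ 2)"

definition invertible_el :: "'a::ring_1 \<Rightarrow> bool"
  where "invertible_el a \<longleftrightarrow> (\<exists>b. a * b = 1 \<and> b * a = 1)"

definition spectrum_of :: "(complex \<Rightarrow> 'a \<Rightarrow> 'a) \<Rightarrow> 'a::ring_1 \<Rightarrow> complex set"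
  where "spectrum_of sc a = {z. \<not> invertible_el (a - sc z 1)}"

definition positive_el :: "(complex \<Rightarrow> 'a \<Rightarrow> 'a) \<Rightarrow> ('a \<Rightarrow> 'a) \<Rightarrow> 'a::ring_1 \<Rightarrow> bool"
  where "positive_el sc st a \<longleftrightarrow> st a = a \<and>
     spectrum_of sc a \<subseteq> {c. Im c = 0 \<and> Re c \<ge> 0}"

definition cle :: "(complex \<Rightarrow> 'a \<Rightarrow> 'a) \<Rightarrow> ('a \<Rightarrow> 'a) \<Rightarrow> 'a::ring_1 \<Rightarrow> 'a \<Rightarrow> bool"
  where "cle sc st a b \<longleftrightarrow> positive_el sc st (b - a)"

definition central_positive :: "(complex \<Rightarrow> 'a \<Rightarrow> 'a) \<Rightarrow> ('a \<Rightarrow> 'a) \<Rightarrow> 'a::ring_1 \<Rightarrow> bool"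
  where "central_positive sc st a \<longleftrightarrow> positive_el sc st a \<and> (\<forall>b. a * b = b * a)"

definition cstar_metric :: "(complex \<Rightarrow> 'a \<Rightarrow> 'a) \<Rightarrow> ('a \<Rightarrow> 'a) \<Rightarrow> ('x \<Rightarrow> 'x \<Rightarrow> 'a::ring_1) \<Rightarrow> bool"
  where "cstar_metric sc st d \<longleftrightarrow>
    (\<forall>x y. positive_el sc st (d x y)) \<and>
    (\<forall>x y. d x y = 0 \<longleftrightarrow> x = y) \<and>
    (\<forall>x y. d x y = d y x) \<and>
    (\<forall>x y z. cle sc st (d x y) (d x z + d z y))"

definition cstar_complete :: "('x \<Rightarrow> 'x \<Rightarrow> 'a::real_normed_vector) \<Rightarrow> bool"
  where "cstar_complete d \<longleftrightarrow>
    (\<forall>s::nat \<Rightarrow> 'x. (\<forall>e>0. \<exists>N. \<forall>n\<ge>N. \<forall>m\<ge>N. norm (d (s n) (s m)) < e) \<longrightarrow>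
        (\<exists>x. (\<lambda>n. norm (d (s n) x)) \<longlonglongrightarrow> 0))"

definition orbitally_continuous_at :: "('x \<Rightarrow> 'x \<Rightarrow> 'a::real_normed_vector) \<Rightarrow> ('x \<Rightarrow> 'x) \<Rightarrow> 'x \<Rightarrow> bool"
  where "orbitally_continuous_at d T u \<longleftrightarrow>
    (\<forall>x (ns::nat \<Rightarrow> nat). strict_mono ns \<longrightarrow>
       (\<lambda>i. norm (d ((T ^^ ns i) x) u)) \<longlonglongrightarrow> 0 \<longrightarrow>
       (\<lambda>i. norm (d ((T ^^ (ns i + 1)) x) (T u))) \<longlonglongrightarrow> 0)"

definition orbitally_continuous :: "('x \<Rightarrow> 'x \<Rightarrow> 'a::real_normed_vector) \<Rightarrow> ('x \<Rightarrow> 'x) \<Rightarrow> bool"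
  where "orbitally_continuous d T \<longleftrightarrow> (\<forall>u. orbitally_continuous_at d T u)"

end

theory Submission
  imports Defs "HOL-Analysis.Analysis"
begin

text \<open>The contraction condition only enters through norms. Once one knows that
\<open>\<theta> \<preceq> a \<preceq> b\<close> implies \<open>\<parallel>a\<parallel> \<le> \<parallel>b\<parallel>\<close>, the map \<open>(x, y) \<mapsto> \<parallel>d(x, y)\<parallel>\<close> is a real metric and
\<open>\<parallel>d(T\<^sup>n x, S\<^sup>n y)\<parallel> \<le> \<parallel>q(x, y)\<parallel>\<^sup>n \<parallel>\<delta>(x, y)\<parallel>\<close> is summable in \<open>n\<close>. Hence the \<open>T\<close>- and
\<open>S\<close>-orbits of any point are Cauchy with a common limit, which orbital continuity turns
into a common fixed point; conversely, every \<open>T\<close>-orbit converges to a fixed point of \<open>S\<close>,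
which gives orbital continuity.

The monotonicity of the norm is the genuinely C*-algebraic part. For self-adjoint \<open>a\<close>
the C*-identity gives \<open>\<parallel>a\<^bsup>2\<^sup>m\<^esup>\<parallel> = \<parallel>a\<parallel>\<^bsup>2\<^sup>m\<^esup>\<close>, so \<open>\<parallel>a\<parallel>\<close> is bounded by the spectral radius
once we know that invertibility of \<open>1 - \<mu>x\<close> on the closed unit disc forces
\<open>x\<^bsup>2\<^sup>m\<^esup> \<rightarrow> 0\<close>. This is shown without holomorphy: the inverse of \<open>1 - (\<mu>x)\<^bsup>2\<^sup>m\<^sup>+\<^sup>1\<^esup>\<close> is the
average of the inverses of \<open>1 - (\<mu>x)\<^bsup>2\<^sup>m\<^esup>\<close> and \<open>1 + (\<mu>x)\<^bsup>2\<^sup>m\<^esup>\<close>, and the latter is again of the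
former kind at a rotated point of the disc. So these inverses are uniformly
equicontinuous, and a continuity argument in the radius \<open>s \<in> [0, 1]\<close> propagates
\<open>(sx)\<^bsup>2\<^sup>m\<^esup> \<rightarrow> 0\<close> from small \<open>s\<close> up to \<open>s = 1\<close>.\<close>

section \<open>Inverses in Banach algebras\<close>

definition inv_el :: "'a::ring_1 \<Rightarrow> 'a" where
  "inv_el y = (SOME z. y * z = 1 \<and> z * y = 1)"

lemma inv_el_inverse: "invertible_el y \<Longrightarrow> y * inv_el y = 1 \<and> inv_el y * y = 1"
  unfolding invertible_el_def inv_el_def by (rule someI_ex)

lemma inv_el_unique:
  assumes "y * z = 1" "z * y = 1"
  shows "inv_el y = z"
proof -
  have i: "invertible_el y" using assms unfolding invertible_el_def by blast
  have "inv_el y = (z * y) * inv_el y" using assms by simp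
  also have "\<dots> = z * (y * inv_el y)" by (simp add: mult.assoc)
  also have "\<dots> = z" using inv_el_inverse[OF i] by simp
  finally show ?thesis .
qed

lemma invertible_el_mult: "invertible_el a \<Longrightarrow> invertible_el b \<Longrightarrow> invertible_el (a * b)"
proof -
  assume "invertible_el a" "invertible_el b"
  then obtain a' b' where "a * a' = 1" "a' * a = 1" "b * b' = 1" "b' * b = 1"
    unfolding invertible_el_def by blast
  then have "(a * b) * (b' * a') = 1" "(b' * a') * (a * b) = 1"
    by (simp_all add: mult.assoc) (metis mult.assoc mult_1_left)+
  then show ?thesis unfolding invertible_el_def by blast
qed

lemma invertible_el_minus_iff: "invertible_el (- a) \<longleftrightarrow> invertible_el (a::'a::ring_1)"
  unfolding invertible_el_def by (metis minus_minus minus_mult_minus)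

lemma neumann_inverse:
  fixes y :: "'a::{real_normed_algebra_1,banach}"
  assumes "norm y < 1"
  shows "invertible_el (1 - y) \<and> norm (inv_el (1 - y)) \<le> 1 / (1 - norm y)"
proof -
  have sn: "summable (\<lambda>n. norm y ^ n)" using assms by simp
  have sn': "summable (\<lambda>n. norm (y ^ n))"
    by (rule summable_comparison_test[OF _ sn]) (auto intro: norm_power_ineq)
  have s: "summable (\<lambda>n. y ^ n)" by (rule summable_norm_cancel[OF sn'])
  define z where "z = (\<Sum>n. y ^ n)"
  have tail: "(\<Sum>n. y ^ Suc n) = z - 1" using suminf_split_head[OF s] unfolding z_def by simp
  have "y * z = (\<Sum>n. y * y ^ n)" unfolding z_def using suminf_mult[OF s] by simp
  then have l: "y * z = z - 1" using tail by simp
  have "z * y = (\<Sum>n. y ^ n * y)" unfolding z_def using suminf_mult2[OF s] by simp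
  then have r: "z * y = z - 1" using tail by (simp add: power_commutes)
  have inv: "(1 - y) * z = 1" "z * (1 - y) = 1" using l r by (simp_all add: algebra_simps)
  have "norm z \<le> (\<Sum>n. norm (y ^ n))" unfolding z_def by (rule summable_norm[OF sn'])
  also have "\<dots> \<le> (\<Sum>n. norm y ^ n)"
    by (rule suminf_le[OF _ sn' sn]) (auto intro: norm_power_ineq)
  also have "\<dots> = 1 / (1 - norm y)" using suminf_geometric[of "norm y"] assms by simp
  finally show ?thesis
    using inv inv_el_unique[OF inv] unfolding invertible_el_def by auto
qed

lemma invertible_el_scaleR_one_minus:
  fixes b :: "'a::{real_normed_algebra_1,banach}"
  assumes "norm b < t"
  shows "invertible_el (t *\<^sub>R 1 - b) \<and> norm (inv_el (t *\<^sub>R 1 - b)) \<le> 1 / (t - norm b)"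
proof -
  have t: "0 < t" using assms norm_ge_zero[of b] by linarith
  define y where "y = (1 / t) *\<^sub>R b"
  have "norm y < 1" unfolding y_def using assms t by (simp add: divide_less_eq)
  from neumann_inverse[OF this]
  have iy: "invertible_el (1 - y)" and ny: "norm (inv_el (1 - y)) \<le> 1 / (1 - norm b / t)"
    unfolding y_def using t by auto
  have eq: "t *\<^sub>R 1 - b = t *\<^sub>R (1 - y)" unfolding y_def using t by (simp add: scaleR_diff_right)
  define G where "G = (1 / t) *\<^sub>R inv_el (1 - y)"
  have G: "(t *\<^sub>R 1 - b) * G = 1" "G * (t *\<^sub>R 1 - b) = 1"
    unfolding eq G_def using inv_el_inverse[OF iy] t by simp_all
  have "norm G = norm (inv_el (1 - y)) / t" unfolding G_def using t by simp
  also have "\<dots> \<le> 1 / (1 - norm b / t) / t" using divide_right_mono[OF ny] t by simp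
  also have "\<dots> = 1 / (t - norm b)" using t assms by (simp add: field_simps)
  finally show ?thesis using G inv_el_unique[OF G] unfolding invertible_el_def by auto
qed

lemma invertible_el_diff_small:
  fixes B C :: "'a::{real_normed_algebra_1,banach}"
  assumes B: "invertible_el B" and small: "norm (inv_el B) * norm C < 1"
  shows "invertible_el (B - C)"
proof -
  have "norm (inv_el B * C) < 1" using norm_mult_ineq[of "inv_el B" C] small by linarith
  then have "invertible_el (1 - inv_el B * C)" using neumann_inverse by blast
  moreover have "B * (1 - inv_el B * C) = B - C"
    using inv_el_inverse[OF B] by (simp add: right_diff_distrib mult.assoc[symmetric])
  ultimately show ?thesis using invertible_el_mult[OF B] by metis
qed

lemma norm_inverse_diff_le:
  fixes A B F G :: "'a::real_normed_algebra_1"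
  assumes F: "F * A = 1" and G: "B * G = 1" and small: "norm (B - A) * norm G \<le> 1/2"
  shows "norm (F - G) \<le> 2 * norm G * (norm (B - A) * norm G)"
proof -
  define t where "t = norm (B - A) * norm G"
  have "F * (B - A) * G = F * (B * G) - (F * A) * G"
    by (simp only: right_diff_distrib left_diff_distrib mult.assoc)
  then have "F - G = F * (B - A) * G" using F G by simp
  moreover have "norm (F * (B - A) * G) \<le> norm F * norm (B - A) * norm G"
    by (rule order_trans[OF norm_mult_ineq mult_right_mono[OF norm_mult_ineq norm_ge_zero]])
  ultimately have "norm (F - G) \<le> norm F * t" by (simp add: t_def mult.assoc)
  also have "\<dots> \<le> (norm (F - G) + norm G) * t"
    unfolding t_def using norm_triangle_sub[of F G] by (intro mult_right_mono) simp_all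
  finally have "norm (F - G) * (1 - t) \<le> norm G * t" by (simp add: algebra_simps)
  moreover have "norm (F - G) * (1/2) \<le> norm (F - G) * (1 - t)"
    using small unfolding t_def by (intro mult_left_mono) simp_all
  ultimately show ?thesis unfolding t_def by linarith
qed

lemma inv_el_one_minus_tendsto_one_iff:
  fixes Y :: "nat \<Rightarrow> 'a::real_normed_algebra_1"
  assumes inv: "\<And>m. invertible_el (1 - Y m)"
  shows "(\<lambda>m. inv_el (1 - Y m)) \<longlonglongrightarrow> 1 \<longleftrightarrow> Y \<longlonglongrightarrow> 0"
proof -
  have G: "inv_el (1 - Y m) * (1 - Y m) = 1" "(1 - Y m) * inv_el (1 - Y m) = 1" for m
    using inv_el_inverse[OF inv] by auto
  show ?thesis
  proof
    assume "(\<lambda>m. inv_el (1 - Y m)) \<longlonglongrightarrow> 1"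
    then have t: "(\<lambda>m. norm (inv_el (1 - Y m) - 1)) \<longlonglongrightarrow> 0"
      by (simp add: LIM_zero_iff tendsto_norm_zero)
    have "eventually (\<lambda>m. norm (inv_el (1 - Y m) - 1) < 1/2) sequentially"
      using order_tendstoD(2)[OF t, of "1/2"] by simp
    then have "eventually (\<lambda>m. norm (Y m) \<le> 2 * norm (inv_el (1 - Y m) - 1)) sequentially"
      by eventually_elim
        (use norm_inverse_diff_le[OF G(2) mult_1_left[of 1]] in \<open>simp add: norm_minus_commute\<close>)
    then show "Y \<longlonglongrightarrow> 0" by (rule Lim_null_comparison) (use tendsto_mult_right_zero[OF t] in simp)
  next
    assume "Y \<longlonglongrightarrow> 0"
    then have t: "(\<lambda>m. norm (Y m)) \<longlonglongrightarrow> 0" by (rule tendsto_norm_zero)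
    have "eventually (\<lambda>m. norm (Y m) < 1/2) sequentially"
      using order_tendstoD(2)[OF t, of "1/2"] by simp
    then have "eventually (\<lambda>m. norm (inv_el (1 - Y m) - 1) \<le> 2 * norm (Y m)) sequentially"
      by eventually_elim (use norm_inverse_diff_le[OF G(1) mult_1_left[of 1]] in simp)
    then have "(\<lambda>m. inv_el (1 - Y m) - 1) \<longlonglongrightarrow> 0"
      by (rule Lim_null_comparison) (use tendsto_mult_right_zero[OF t] in simp)
    then show "(\<lambda>m. inv_el (1 - Y m)) \<longlonglongrightarrow> 1" by (simp add: LIM_zero_iff)
  qed
qed

lemma inv_el_one_minus_square:
  fixes Y :: "'a::real_normed_algebra_1"
  assumes "invertible_el (1 - Y)" "invertible_el (1 + Y)"
  shows "inv_el (1 - Y * Y) = (1/2) *\<^sub>R (inv_el (1 - Y) + inv_el (1 + Y))"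
proof (rule inv_el_unique)
  define A where "A = inv_el (1 - Y)"
  define B where "B = inv_el (1 + Y)"
  have A: "(1 - Y) * A = 1" "A * (1 - Y) = 1" using inv_el_inverse[OF assms(1)] A_def by auto
  have B: "(1 + Y) * B = 1" "B * (1 + Y) = 1" using inv_el_inverse[OF assms(2)] B_def by auto
  have f1: "1 - Y * Y = (1 + Y) * (1 - Y)" by (simp add: algebra_simps)
  have f2: "1 - Y * Y = (1 - Y) * (1 + Y)" by (simp add: algebra_simps)
  have two: "(1 + Y) + (1 - Y) = (2::real) *\<^sub>R (1::'a)" by (simp add: scaleR_2)
  have "(1 - Y * Y) * A = 1 + Y" unfolding f1 by (simp add: mult.assoc A)
  moreover have "(1 - Y * Y) * B = 1 - Y" unfolding f2 by (simp add: mult.assoc B)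
  ultimately have "(1 - Y * Y) * (A + B) = (2::real) *\<^sub>R 1" using two by (simp add: distrib_left)
  then show "(1 - Y * Y) * ((1/2) *\<^sub>R (A + B)) = 1" by (simp add: mult_scaleR_right)
  have "A * (1 - Y * Y) = 1 + Y" unfolding f2 by (simp add: mult.assoc[symmetric] A)
  moreover have "B * (1 - Y * Y) = 1 - Y" unfolding f1 by (simp add: mult.assoc[symmetric] B)
  ultimately have "(A + B) * (1 - Y * Y) = (2::real) *\<^sub>R 1" using two by (simp add: distrib_right)
  then show "((1/2) *\<^sub>R (A + B)) * (1 - Y * Y) = 1" by (simp add: mult_scaleR_left)
qed

section \<open>Powers of order \<open>2\<^sup>m\<close>\<close>

lemma LIMSEQ_power_pow2_zero:
  assumes "0 \<le> (c::real)" "c < 1"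
  shows "(\<lambda>m. c ^ 2 ^ m) \<longlonglongrightarrow> 0"
proof (rule Lim_null_comparison[OF _ LIMSEQ_power_zero[of c]])
  show "\<forall>\<^sub>F m in sequentially. norm (c ^ 2 ^ m) \<le> c ^ m"
  proof (rule always_eventually, rule allI)
    fix m :: nat
    have "m \<le> 2 ^ m" using less_exp[of m] by simp
    then show "norm (c ^ 2 ^ m) \<le> c ^ m" using assms by (simp add: power_decreasing)
  qed
qed (use assms in simp)

lemma pow2_tendsto_zero_of_norm_less_one:
  fixes x :: "'a::real_normed_algebra_1"
  assumes "norm x < 1"
  shows "(\<lambda>m. x ^ 2 ^ m) \<longlonglongrightarrow> 0"
  by (rule Lim_null_comparison[OF always_eventually LIMSEQ_power_pow2_zero[of "norm x"]])
    (use assms norm_power_ineq in auto)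

lemma exists_scaleR_pow2_tendsto_zero:
  fixes x :: "'a::real_normed_algebra_1"
  obtains s where "0 < s" "s \<le> 1" "(\<lambda>m. (s *\<^sub>R x) ^ 2 ^ m) \<longlonglongrightarrow> 0"
proof -
  define n where "n = norm x"
  define s where "s = 1 / (2 * (n + 1))"
  have "0 \<le> n" unfolding n_def by simp
  then have "0 < s" "s \<le> 1" "norm (s *\<^sub>R x) < 1"
    unfolding s_def by (simp_all add: n_def[symmetric] divide_le_eq_1 divide_less_eq)
  with pow2_tendsto_zero_of_norm_less_one[of "s *\<^sub>R x"] show thesis by (intro that)
qed

lemma pow2_tendsto_zero_scaleR_mono:
  fixes x :: "'a::real_normed_algebra_1"
  assumes "0 \<le> s'" "s' \<le> s" "(\<lambda>m. (s *\<^sub>R x) ^ 2 ^ m) \<longlonglongrightarrow> 0"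
  shows "(\<lambda>m. (s' *\<^sub>R x) ^ 2 ^ m) \<longlonglongrightarrow> 0"
proof (rule Lim_null_comparison[of _ "\<lambda>m. norm ((s *\<^sub>R x) ^ 2 ^ m)"])
  show "\<forall>\<^sub>F m in sequentially. norm ((s' *\<^sub>R x) ^ 2 ^ m) \<le> norm ((s *\<^sub>R x) ^ 2 ^ m)"
    using assms by (auto intro!: always_eventually mult_right_mono power_mono)
qed (use assms(3) tendsto_norm_zero in blast)

text \<open>If \<open>\<parallel>x\<^bsup>N\<^esup>\<parallel> < 1/2\<close> with \<open>N = 2\<^sup>m\<^sup>0\<close>, then \<open>t = (3/2)\<^bsup>1/N\<^esup>\<close> still gives
\<open>\<parallel>(tx)\<^bsup>N 2\<^sup>k\<^esup>\<parallel> \<le> (3/4)\<^bsup>2\<^sup>k\<^esup>\<close>.\<close>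

lemma pow2_tendsto_zero_rescale:
  fixes x :: "'a::real_normed_algebra_1"
  assumes "(\<lambda>m. x ^ 2 ^ m) \<longlonglongrightarrow> 0"
  obtains t where "1 < t" "(\<lambda>m. (t *\<^sub>R x) ^ 2 ^ m) \<longlonglongrightarrow> 0"
proof -
  obtain m0 where m0: "norm (x ^ 2 ^ m0 - 0) < 1/2"
    using LIMSEQ_D[OF assms, of "1/2"] by auto
  define N where "N = (2::nat) ^ m0"
  have N0: "0 < N" unfolding N_def by simp
  define t where "t = root N (3/2)"
  have tN: "t ^ N = 3/2" unfolding t_def using real_root_pow_pos[OF N0] by simp
  have t1: "1 < t" unfolding t_def using N0 by simp
  have bound: "norm ((t *\<^sub>R x) ^ 2 ^ (k + m0)) \<le> (3/4) ^ 2 ^ k" for k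
  proof -
    have p: "(2::nat) ^ (k + m0) = N * 2 ^ k" unfolding N_def by (simp add: power_add)
    have "norm ((t *\<^sub>R x) ^ 2 ^ (k + m0)) = (3/2) ^ 2 ^ k * norm ((x ^ N) ^ 2 ^ k)"
      unfolding p by (simp add: power_mult tN)
    also have "\<dots> \<le> (3/2) ^ 2 ^ k * (1/2) ^ 2 ^ k"
      using m0 unfolding N_def
      by (intro mult_left_mono order_trans[OF norm_power_ineq power_mono]) simp_all
    also have "\<dots> = (3/4) ^ 2 ^ k" by (simp add: power_mult_distrib[symmetric])
    finally show ?thesis .
  qed
  have "(\<lambda>k. (t *\<^sub>R x) ^ 2 ^ (k + m0)) \<longlonglongrightarrow> 0"
  proof (rule Lim_null_comparison[OF always_eventually])
    show "\<forall>k. norm ((t *\<^sub>R x) ^ 2 ^ (k + m0)) \<le> (3/4) ^ 2 ^ k" using bound by blast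
    show "(\<lambda>k. (3/4::real) ^ 2 ^ k) \<longlonglongrightarrow> 0" by (rule LIMSEQ_power_pow2_zero) simp_all
  qed
  then have "(\<lambda>m. (t *\<^sub>R x) ^ 2 ^ m) \<longlonglongrightarrow> 0" by (rule LIMSEQ_offset)
  with t1 show thesis by (rule that)
qed

section \<open>Unital C*-algebras\<close>

locale cstar_algebra =
  fixes sc :: "complex \<Rightarrow> 'a::{real_normed_algebra_1,banach} \<Rightarrow> 'a" and st :: "'a \<Rightarrow> 'a"
  assumes alg: "unital_cstar_algebra sc st"
begin

lemmas cstar_laws = alg[unfolded unital_cstar_algebra_def]

lemma sc_of_real: "sc (of_real r) x = r *\<^sub>R x" using cstar_laws by simp
lemma sc_add_left: "sc (c + d) x = sc c x + sc d x" using cstar_laws by simp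
lemma sc_mult: "sc (c * d) x = sc c (sc d x)" using cstar_laws by simp
lemma sc_mult_left: "sc c (x * y) = sc c x * y" using cstar_laws by simp
lemma sc_mult_right: "sc c (x * y) = x * sc c y" using cstar_laws by metis
lemma norm_sc: "norm (sc c x) = cmod c * norm x" using cstar_laws by simp
lemma st_add: "st (x + y) = st x + st y" using cstar_laws by simp
lemma st_sc: "st (sc c x) = sc (cnj c) (st x)" using cstar_laws by simp
lemma st_mult: "st (x * y) = st y * st x" using cstar_laws by simp
lemma st_st: "st (st x) = x" using cstar_laws by simp
lemma norm_st_mult_self: "norm (st x * x) = norm x ^ 2" using cstar_laws by simp

lemma sc_one: "sc 1 x = x" using sc_of_real[of 1 x] by simp
lemma sc_zero: "sc 0 x = 0" using sc_of_real[of 0 x] by simp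
lemma sc_minus_left: "sc (- c) x = - sc c x"
  using sc_add_left[of c "-c" x] by (simp add: sc_zero eq_neg_iff_add_eq_0 add.commute)
lemma sc_diff_left: "sc (c - d) x = sc c x - sc d x"
  using sc_add_left[of c "-d" x] by (simp add: sc_minus_left)

lemma sc_power: "(sc \<mu> x) ^ n = sc (\<mu> ^ n) (x ^ n)"
proof (induction n)
  case 0
  then show ?case by (simp add: sc_one)
next
  case (Suc n)
  have "sc \<mu> x ^ Suc n = sc \<mu> (x * sc (\<mu> ^ n) (x ^ n))" using Suc by (simp add: sc_mult_left)
  also have "\<dots> = sc (\<mu> ^ Suc n) (x ^ Suc n)" by (simp add: sc_mult_right sc_mult)
  finally show ?case .
qed

lemma st_one: "st 1 = 1"
proof -
  have "st 1 = st 1 * st (st 1)" by (simp add: st_st)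
  also have "\<dots> = st (st 1 * 1)" by (simp only: st_mult)
  also have "\<dots> = 1" by (simp add: st_st)
  finally show ?thesis .
qed

lemma st_zero: "st 0 = 0" using st_add[of 0 0] by simp
lemma st_minus: "st (- x) = - st x"
  using st_add[of x "-x"] by (simp add: st_zero eq_neg_iff_add_eq_0 add.commute)
lemma st_diff: "st (x - y) = st x - st y" using st_add[of x "-y"] by (simp add: st_minus)
lemma st_scaleR: "st (r *\<^sub>R x) = r *\<^sub>R st x"
  using st_sc[of "of_real r" x] by (simp add: sc_of_real)
lemma st_power: "st (x ^ n) = st x ^ n"
  by (induction n) (simp_all add: st_one st_mult power_Suc2[symmetric] power_commutes)

lemma norm_power_pow2_self_adjoint:
  assumes "st y = y"
  shows "norm (y ^ 2 ^ m) = norm y ^ 2 ^ m"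
proof (induction m)
  case 0
  then show ?case by simp
next
  case (Suc m)
  have "y ^ 2 ^ Suc m = st (y ^ 2 ^ m) * y ^ 2 ^ m"
    using assms by (simp add: st_power power_add[symmetric] mult_2)
  then have "norm (y ^ 2 ^ Suc m) = norm (y ^ 2 ^ m) ^ 2" by (simp add: norm_st_mult_self)
  also have "\<dots> = norm y ^ 2 ^ Suc m" using Suc by (simp add: power_mult[symmetric] mult.commute)
  finally show ?case .
qed

lemma invertible_el_sc_one: "c \<noteq> 0 \<Longrightarrow> invertible_el (sc c 1)"
  unfolding invertible_el_def
  by (rule exI[of _ "sc (1/c) 1"]) (simp add: sc_mult_left[symmetric] sc_mult[symmetric] sc_one)

lemma invertible_el_sub_sc_one:
  assumes "norm c < cmod w"
  shows "invertible_el (c - sc w 1)"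
proof -
  have w: "w \<noteq> 0" using assms norm_ge_zero[of c] by auto
  have n: "norm (sc (1/w) c) < 1" using assms w by (simp add: norm_sc norm_divide field_simps)
  have "c - sc w 1 = sc (- w) 1 * (1 - sc (1/w) c)"
    using w by (simp add: algebra_simps sc_mult_left[symmetric] sc_mult[symmetric] sc_minus_left sc_one)
  moreover have "invertible_el (sc (- w) 1)" using w by (intro invertible_el_sc_one) simp
  ultimately show ?thesis using neumann_inverse[OF n] invertible_el_mult by metis
qed

end

section \<open>Vanishing of \<open>x\<^bsup>2\<^sup>m\<^esup>\<close> when \<open>1 - \<mu>x\<close> is invertible on the unit disc\<close>

lemma exists_unit_root_minus_one: "\<exists>\<zeta>::complex. cmod \<zeta> = 1 \<and> \<zeta> ^ 2 ^ m = - 1"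
proof -
  have "cis (pi / 2 ^ m) ^ 2 ^ m = cis (real (2 ^ m) * (pi / 2 ^ m))" by (rule Complex.DeMoivre)
  also have "real (2 ^ m) * (pi / 2 ^ m) = pi" by simp
  finally show ?thesis by (intro exI[of _ "cis (pi / 2 ^ m)"]) simp
qed

lemma uniformly_equicontinuous_averages:
  fixes g :: "nat \<Rightarrow> 'a::metric_space \<Rightarrow> 'b::real_normed_vector"
  assumes uc: "uniformly_continuous_on D (g 0)"
    and into: "\<And>m \<mu>. \<mu> \<in> D \<Longrightarrow> \<rho> m \<mu> \<in> D"
    and nonexpansive: "\<And>m \<mu> \<nu>. dist (\<rho> m \<nu>) (\<rho> m \<mu>) \<le> dist \<nu> \<mu>"
    and average: "\<And>m \<mu>. \<mu> \<in> D \<Longrightarrow> g (Suc m) \<mu> = (1/2) *\<^sub>R (g m \<mu> + g m (\<rho> m \<mu>))"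
    and e: "0 < e"
  obtains \<delta> where "0 < \<delta>"
    "\<And>m \<mu> \<nu>. \<mu> \<in> D \<Longrightarrow> \<nu> \<in> D \<Longrightarrow> dist \<nu> \<mu> < \<delta> \<Longrightarrow> dist (g m \<nu>) (g m \<mu>) < e"
proof -
  obtain \<delta> where \<delta>: "0 < \<delta>"
    "\<And>\<mu> \<nu>. \<mu> \<in> D \<Longrightarrow> \<nu> \<in> D \<Longrightarrow> dist \<nu> \<mu> < \<delta> \<Longrightarrow> dist (g 0 \<nu>) (g 0 \<mu>) < e"
    using uc e unfolding uniformly_continuous_on_def by metis
  have "dist (g m \<nu>) (g m \<mu>) < e" if "\<mu> \<in> D" "\<nu> \<in> D" "dist \<nu> \<mu> < \<delta>" for m \<mu> \<nu>
    using that
  proof (induction m arbitrary: \<mu> \<nu>)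
    case 0
    then show ?case using \<delta>(2) by blast
  next
    case (Suc m)
    have "dist (g m \<nu>) (g m \<mu>) < e" using Suc by blast
    moreover have "dist (g m (\<rho> m \<nu>)) (g m (\<rho> m \<mu>)) < e"
      using Suc.IH into Suc.prems nonexpansive[of m \<nu> \<mu>] by force
    moreover have "g (Suc m) \<nu> - g (Suc m) \<mu>
        = (1/2) *\<^sub>R ((g m \<nu> - g m \<mu>) + (g m (\<rho> m \<nu>) - g m (\<rho> m \<mu>)))"
      using average Suc.prems by (simp add: algebra_simps)
    then have "2 * dist (g (Suc m) \<nu>) (g (Suc m) \<mu>)
        \<le> dist (g m \<nu>) (g m \<mu>) + dist (g m (\<rho> m \<nu>)) (g m (\<rho> m \<mu>))"
      by (simp add: dist_norm norm_triangle_ineq)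
    ultimately show ?case by linarith
  qed
  with \<delta>(1) show thesis by (rule that)
qed

locale unit_disc_resolvent = cstar_algebra +
  fixes x
  assumes invertible_on_disc: "cmod \<mu> \<le> 1 \<Longrightarrow> invertible_el (1 - sc \<mu> x)"
begin

definition pow2_resolvent :: "nat \<Rightarrow> complex \<Rightarrow> 'a" where
  "pow2_resolvent m \<mu> = inv_el (1 - sc \<mu> x ^ 2 ^ m)"

lemma sc_rotate_power_pow2:
  assumes "\<zeta> ^ 2 ^ m = -1"
  shows "sc (\<zeta> * \<mu>) x ^ 2 ^ m = - (sc \<mu> x ^ 2 ^ m)"
  unfolding sc_power using assms by (simp add: power_mult_distrib sc_minus_left)

lemma invertible_one_minus_pow2:
  assumes "cmod \<mu> \<le> 1"
  shows "invertible_el (1 - sc \<mu> x ^ 2 ^ m)"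
  using assms
proof (induction m arbitrary: \<mu>)
  case 0
  then show ?case using invertible_on_disc by simp
next
  case (Suc m)
  obtain \<zeta> where \<zeta>: "cmod \<zeta> = 1" "\<zeta> ^ 2 ^ m = -1" using exists_unit_root_minus_one by blast
  define Y where "Y = sc \<mu> x ^ 2 ^ m"
  have "1 - sc \<mu> x ^ 2 ^ Suc m = (1 - Y) * (1 - - Y)"
    unfolding Y_def by (simp add: algebra_simps power_add mult_2)
  moreover have "invertible_el (1 - Y)" using Suc Y_def by simp
  moreover have "invertible_el (1 - - Y)"
    using Suc.IH[of "\<zeta> * \<mu>"] Suc.prems \<zeta> unfolding Y_def sc_rotate_power_pow2[OF \<zeta>(2)]
    by (simp add: norm_mult)
  ultimately show ?case using invertible_el_mult by simp
qed

lemma pow2_resolvent_Suc: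
  assumes \<mu>: "cmod \<mu> \<le> 1" and \<zeta>: "cmod \<zeta> = 1" "\<zeta> ^ 2 ^ m = -1"
  shows "pow2_resolvent (Suc m) \<mu> = (1/2) *\<^sub>R (pow2_resolvent m \<mu> + pow2_resolvent m (\<zeta> * \<mu>))"
proof -
  define Y where "Y = sc \<mu> x ^ 2 ^ m"
  have sq: "sc \<mu> x ^ 2 ^ Suc m = Y * Y" unfolding Y_def by (simp add: power_add[symmetric] mult_2)
  have rot: "sc (\<zeta> * \<mu>) x ^ 2 ^ m = - Y" unfolding Y_def by (rule sc_rotate_power_pow2[OF \<zeta>(2)])
  have "invertible_el (1 - Y)" using invertible_one_minus_pow2[OF \<mu>] Y_def by simp
  moreover have "invertible_el (1 + Y)"
    using invertible_one_minus_pow2[of "\<zeta> * \<mu>" m] \<mu> \<zeta> rot by (simp add: norm_mult)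
  ultimately show ?thesis
    unfolding pow2_resolvent_def sq rot Y_def[symmetric] by (simp add: inv_el_one_minus_square)
qed

lemma continuous_on_pow2_resolvent_0: "continuous_on (cball 0 1) (pow2_resolvent 0)"
proof (rule continuous_on_eq_continuous_within[THEN iffD2], intro ballI)
  fix \<mu> assume \<mu>: "\<mu> \<in> cball (0::complex) 1"
  define F where "F = pow2_resolvent 0"
  define t where "t \<nu> = norm (sc (\<nu> - \<mu>) x) * norm (F \<mu>)" for \<nu>
  have t_tendsto: "(t \<longlongrightarrow> 0) (at \<mu> within cball 0 1)"
    unfolding t_def norm_sc
    by (intro tendsto_mult_left_zero tendsto_norm_zero LIM_zero tendsto_ident_at)
  have bound: "norm (F \<nu> - F \<mu>) \<le> 2 * norm (F \<mu>) * t \<nu>" if "\<nu> \<in> cball 0 1" "t \<nu> \<le> 1/2" for \<nu>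
  proof -
    have "F \<nu> * (1 - sc \<nu> x) = 1" "(1 - sc \<mu> x) * F \<mu> = 1"
      using inv_el_inverse[OF invertible_on_disc] that(1) \<mu>
      unfolding F_def pow2_resolvent_def by auto
    from norm_inverse_diff_le[OF this] that(2) show ?thesis
      unfolding t_def by (simp add: sc_diff_left)
  qed
  have "eventually (\<lambda>\<nu>. t \<nu> \<le> 1/2) (at \<mu> within cball 0 1)"
    using order_tendstoD(2)[OF t_tendsto, of "1/2"] by (auto elim: eventually_mono)
  moreover have "eventually (\<lambda>\<nu>. \<nu> \<in> cball 0 1) (at \<mu> within cball 0 1)"
    by (simp add: eventually_at_filter)
  ultimately have "eventually (\<lambda>\<nu>. norm (F \<nu> - F \<mu>) \<le> 2 * norm (F \<mu>) * t \<nu>)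
      (at \<mu> within cball 0 1)"
    by eventually_elim (rule bound)
  then have "((\<lambda>\<nu>. F \<nu> - F \<mu>) \<longlongrightarrow> 0) (at \<mu> within cball 0 1)"
    by (rule Lim_null_comparison) (use tendsto_mult_right_zero[OF t_tendsto] in simp)
  then show "continuous (at \<mu> within cball 0 1) (pow2_resolvent 0)"
    unfolding continuous_within F_def by (simp add: LIM_zero_iff)
qed

lemma pow2_resolvent_equicontinuous:
  assumes "0 < e"
  obtains \<delta> where "0 < \<delta>" "\<And>m \<mu> \<nu>. \<mu> \<in> cball 0 1 \<Longrightarrow> \<nu> \<in> cball 0 1 \<Longrightarrow> dist \<nu> \<mu> < \<delta> \<Longrightarrow>
    dist (pow2_resolvent m \<nu>) (pow2_resolvent m \<mu>) < e"
proof -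
  obtain \<zeta> where \<zeta>: "\<And>m. cmod (\<zeta> m) = 1" "\<And>m. \<zeta> m ^ 2 ^ m = -1"
    using exists_unit_root_minus_one by metis
  show thesis
  proof (rule uniformly_equicontinuous_averages[of "cball 0 1" pow2_resolvent "\<lambda>m \<mu>. \<zeta> m * \<mu>"])
    show "uniformly_continuous_on (cball 0 1) (pow2_resolvent 0)"
      by (rule compact_uniformly_continuous[OF continuous_on_pow2_resolvent_0]) simp
    show "dist (\<zeta> m * \<nu>) (\<zeta> m * \<mu>) \<le> dist \<nu> \<mu>" for m \<mu> \<nu>
      using \<zeta>(1) by (simp add: dist_norm right_diff_distrib[symmetric] norm_mult)
  qed (use \<zeta> pow2_resolvent_Suc assms that in \<open>auto simp: norm_mult\<close>)
qed

lemma pow2_resolvent_of_real: "pow2_resolvent m (of_real s) = inv_el (1 - (s *\<^sub>R x) ^ 2 ^ m)"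
  unfolding pow2_resolvent_def sc_of_real ..

lemma pow2_resolvent_tendsto_one_iff:
  assumes "0 \<le> s" "s \<le> 1"
  shows "(\<lambda>m. pow2_resolvent m (of_real s)) \<longlonglongrightarrow> 1 \<longleftrightarrow> (\<lambda>m. (s *\<^sub>R x) ^ 2 ^ m) \<longlonglongrightarrow> 0"
  unfolding pow2_resolvent_of_real
  by (rule inv_el_one_minus_tendsto_one_iff)
    (use invertible_one_minus_pow2[of "of_real s"] assms in \<open>simp add: sc_of_real\<close>)

lemma pow2_tendsto_zero_closed:
  assumes s: "0 \<le> s" "s \<le> 1"
    and approx: "\<And>\<delta>. 0 < \<delta> \<Longrightarrow>
      \<exists>s'. 0 \<le> s' \<and> s' \<le> 1 \<and> \<bar>s - s'\<bar> < \<delta> \<and> (\<lambda>m. (s' *\<^sub>R x) ^ 2 ^ m) \<longlonglongrightarrow> 0"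
  shows "(\<lambda>m. (s *\<^sub>R x) ^ 2 ^ m) \<longlonglongrightarrow> 0"
  unfolding pow2_resolvent_tendsto_one_iff[OF s, symmetric]
proof (rule LIMSEQ_I)
  fix r :: real assume r: "0 < r"
  obtain \<delta> where \<delta>: "0 < \<delta>" "\<And>m \<mu> \<nu>. \<mu> \<in> cball 0 1 \<Longrightarrow> \<nu> \<in> cball 0 1 \<Longrightarrow> dist \<nu> \<mu> < \<delta> \<Longrightarrow>
      dist (pow2_resolvent m \<nu>) (pow2_resolvent m \<mu>) < r/2"
    using pow2_resolvent_equicontinuous[of "r/2"] r by auto
  obtain s' where s': "0 \<le> s'" "s' \<le> 1" "\<bar>s - s'\<bar> < \<delta>" "(\<lambda>m. (s' *\<^sub>R x) ^ 2 ^ m) \<longlonglongrightarrow> 0"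
    using approx[OF \<delta>(1)] by blast
  obtain M where M: "\<And>m. M \<le> m \<Longrightarrow> norm (pow2_resolvent m (of_real s') - 1) < r/2"
    using LIMSEQ_D[OF s'(4)[folded pow2_resolvent_tendsto_one_iff[OF s'(1,2)]], of "r/2"] r by auto
  have "norm (pow2_resolvent m (of_real s) - 1) < r" if "M \<le> m" for m
  proof -
    have "dist (pow2_resolvent m (of_real s)) (pow2_resolvent m (of_real s')) < r/2"
      using \<delta>(2) s s'(1-3) by (simp add: dist_norm flip: of_real_diff)
    then show ?thesis
      using M[OF that] norm_triangle_ineq[of "pow2_resolvent m (of_real s) - pow2_resolvent m (of_real s')"
          "pow2_resolvent m (of_real s') - 1"] by (simp add: dist_norm)
  qed
  then show "\<exists>M. \<forall>m\<ge>M. norm (pow2_resolvent m (of_real s) - 1) < r" by blast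
qed

lemma pow2_tendsto_zero: "(\<lambda>m. x ^ 2 ^ m) \<longlonglongrightarrow> 0"
proof -
  define P where "P s \<longleftrightarrow> (\<lambda>m. (s *\<^sub>R x) ^ 2 ^ m) \<longlonglongrightarrow> 0" for s
  define A where "A = {s. 0 \<le> s \<and> s \<le> 1 \<and> P s}"
  obtain s0 where s0: "0 < s0" "s0 \<le> 1" "P s0"
    unfolding P_def by (rule exists_scaleR_pow2_tendsto_zero)
  then have "s0 \<in> A" unfolding A_def by simp
  then have ne: "A \<noteq> {}" by blast
  have bdd: "bdd_above A" unfolding A_def by (auto intro: bdd_aboveI[of _ 1])
  define ss where "ss = Sup A"
  have ss: "0 \<le> ss" "ss \<le> 1"
    using cSup_upper[OF \<open>s0 \<in> A\<close> bdd] s0 ne unfolding ss_def A_def by (auto intro: cSup_least)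
  have "P ss" unfolding P_def
  proof (rule pow2_tendsto_zero_closed[OF ss])
    fix \<delta> :: real assume "0 < \<delta>"
    then have "ss - \<delta> < Sup A" unfolding ss_def by simp
    then obtain s where "s \<in> A" "ss - \<delta> < s" using less_cSup_iff[OF ne bdd] by blast
    moreover have "s \<le> ss" unfolding ss_def by (rule cSup_upper[OF \<open>s \<in> A\<close> bdd])
    ultimately show "\<exists>s'. 0 \<le> s' \<and> s' \<le> 1 \<and> \<bar>ss - s'\<bar> < \<delta> \<and> (\<lambda>m. (s' *\<^sub>R x) ^ 2 ^ m) \<longlonglongrightarrow> 0"
      unfolding A_def P_def by (intro exI[of _ s]) auto
  qed
  have "ss = 1"
  proof (rule ccontr)
    assume "ss \<noteq> 1"
    obtain t where t: "1 < t" "(\<lambda>m. (t *\<^sub>R (ss *\<^sub>R x)) ^ 2 ^ m) \<longlonglongrightarrow> 0"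
      using pow2_tendsto_zero_rescale \<open>P ss\<close> unfolding P_def by blast
    have "(\<lambda>m. ((t * ss) *\<^sub>R x) ^ 2 ^ m) \<longlonglongrightarrow> 0" using t(2) by simp
    then have "P (min 1 (t * ss))"
      unfolding P_def by (rule pow2_tendsto_zero_scaleR_mono[rotated 2]) (use ss t(1) in auto)
    then have "min 1 (t * ss) \<in> A" unfolding A_def using ss t(1) by auto
    then have "min 1 (t * ss) \<le> ss" unfolding ss_def by (rule cSup_upper[OF _ bdd])
    moreover have "ss < t * ss" using ss s0 cSup_upper[OF \<open>s0 \<in> A\<close> bdd] t(1) ss_def by simp
    ultimately show False using \<open>ss \<noteq> 1\<close> ss by linarith
  qed
  then show ?thesis using \<open>P ss\<close> unfolding P_def by simp
qed

end

section \<open>Spectral bounds for the norm\<close>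

context cstar_algebra
begin

lemma invertible_one_minus_sc_scaleR:
  assumes spectrum: "\<And>z. r < cmod z \<Longrightarrow> invertible_el (a - sc z 1)"
    and r': "r < r'" "0 < r'" and \<mu>: "cmod \<mu> \<le> 1"
  shows "invertible_el (1 - sc \<mu> ((1 / r') *\<^sub>R a))"
proof (cases "\<mu> = 0")
  case True
  then show ?thesis unfolding invertible_el_def by (intro exI[of _ 1]) (simp add: sc_zero)
next
  case False
  have "r' \<le> r' / cmod \<mu>" using False \<mu> r' by (simp add: le_divide_eq mult_left_le)
  then have "r < cmod (of_real r' / \<mu>)" using r' by (simp add: norm_divide)
  then have "invertible_el (sc (- \<mu> / of_real r') 1 * (a - sc (of_real r' / \<mu>) 1))"
    using False r' by (intro invertible_el_mult invertible_el_sc_one spectrum) simp_all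
  moreover have "sc (- \<mu> / of_real r') 1 * (a - sc (of_real r' / \<mu>) 1)
      = sc (- \<mu> / of_real r') a - sc ((- \<mu> / of_real r') * (of_real r' / \<mu>)) 1"
    by (simp only: right_diff_distrib) (metis sc_mult_left mult_1_left sc_mult)
  moreover have "(- \<mu> / of_real r') * (of_real r' / \<mu>) = -1" using False r' by (simp add: field_simps)
  moreover have "sc (- \<mu> / of_real r') a = - sc \<mu> ((1 / r') *\<^sub>R a)"
    unfolding sc_of_real[symmetric] sc_mult[symmetric] sc_minus_left[symmetric]
    by (simp add: divide_inverse)
  ultimately show ?thesis by (simp add: sc_minus_left sc_one)
qed

lemma norm_le_of_spectrum_bound:
  assumes self_adjoint: "st a = a" and r0: "0 \<le> r"
    and spectrum: "\<And>z. r < cmod z \<Longrightarrow> invertible_el (a - sc z 1)"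
  shows "norm a \<le> r"
proof (rule ccontr)
  assume "\<not> norm a \<le> r"
  define r' where "r' = (r + norm a) / 2"
  have r': "r < r'" "r' < norm a" "0 < r'" using \<open>\<not> norm a \<le> r\<close> r0 unfolding r'_def by auto
  define x where "x = (1 / r') *\<^sub>R a"
  have "unit_disc_resolvent sc st x"
    unfolding x_def using invertible_one_minus_sc_scaleR[OF spectrum r'(1,3)]
    by (intro unit_disc_resolvent.intro unit_disc_resolvent_axioms.intro cstar_algebra_axioms)
  then have "(\<lambda>m. x ^ 2 ^ m) \<longlonglongrightarrow> 0" by (rule unit_disc_resolvent.pow2_tendsto_zero)
  then obtain m where "norm (x ^ 2 ^ m - 0) < 1" using LIMSEQ_D[of _ 0 1] by fastforce
  moreover have "st x = x" unfolding x_def by (simp add: st_scaleR self_adjoint)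
  moreover have "1 \<le> norm x ^ 2 ^ m" unfolding x_def using r' by (simp add: one_le_power field_simps)
  ultimately show False using norm_power_pow2_self_adjoint by simp
qed

lemma positive_el_spectrum:
  assumes "positive_el sc st c" "\<not> invertible_el (c - sc w 1)"
  shows "Im w = 0 \<and> 0 \<le> Re w \<and> cmod w \<le> norm c"
proof -
  have "w \<in> spectrum_of sc c" using assms(2) unfolding spectrum_of_def by simp
  then have "Im w = 0 \<and> 0 \<le> Re w" using assms(1) unfolding positive_el_def by auto
  moreover have "cmod w \<le> norm c" using invertible_el_sub_sc_one assms(2) by (meson not_le)
  ultimately show ?thesis by simp
qed

lemma norm_norm_scaleR_one_minus_positive:
  assumes pos: "positive_el sc st c"
  shows "norm (norm c *\<^sub>R 1 - c) \<le> norm c"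
proof (rule norm_le_of_spectrum_bound)
  show "st (norm c *\<^sub>R 1 - c) = norm c *\<^sub>R 1 - c"
    using pos unfolding positive_el_def by (simp add: st_diff st_scaleR st_one)
  fix z assume z: "norm c < cmod z"
  define w where "w = of_real (norm c) - z"
  have "norm c *\<^sub>R 1 - c - sc z 1 = - (c - sc w 1)"
    unfolding w_def by (simp add: sc_diff_left sc_of_real)
  moreover have "invertible_el (c - sc w 1)"
  proof (rule ccontr)
    assume "\<not> invertible_el (c - sc w 1)"
    from positive_el_spectrum[OF pos this] have w: "Im w = 0" "0 \<le> Re w" "cmod w \<le> norm c" by auto
    then have "z = of_real (norm c - Re w)" unfolding w_def by (simp add: complex_eq_iff)
    then have "cmod z = \<bar>norm c - Re w\<bar>" by (simp only: norm_of_real)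
    then have "cmod z \<le> norm c" using w complex_Re_le_cmod[of w] by linarith
    then show False using z by simp
  qed
  ultimately show "invertible_el (norm c *\<^sub>R 1 - c - sc z 1)" using invertible_el_minus_iff by metis
qed simp

lemma invertible_el_scaleR_one_minus_of_cle:
  assumes "cle sc st a b" and l: "norm b < l"
  shows "invertible_el (l *\<^sub>R 1 - a)"
proof -
  have pos: "positive_el sc st (b - a)" using assms(1) unfolding cle_def .
  define s where "s = norm (b - a)"
  define B where "B = (l + s) *\<^sub>R 1 - b"
  have s0: "0 \<le> s" unfolding s_def by simp
  have B: "invertible_el B" "norm (inv_el B) \<le> 1 / (l + s - norm b)"
    using invertible_el_scaleR_one_minus[of b "l + s"] l s0 unfolding B_def by auto
  have C: "norm (s *\<^sub>R 1 - (b - a)) \<le> s"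
    unfolding s_def by (rule norm_norm_scaleR_one_minus_positive[OF pos])
  have "norm (inv_el B) * norm (s *\<^sub>R 1 - (b - a)) \<le> 1 / (l + s - norm b) * s"
    using B(2) C s0 l by (intro mult_mono) simp_all
  also have "\<dots> < 1" using l s0 by (simp add: field_simps)
  finally have "invertible_el (B - (s *\<^sub>R 1 - (b - a)))" by (rule invertible_el_diff_small[OF B(1)])
  moreover have "B - (s *\<^sub>R 1 - (b - a)) = l *\<^sub>R 1 - a" unfolding B_def by (simp add: scaleR_add_left)
  ultimately show ?thesis by simp
qed

lemma norm_mono_positive:
  assumes pa: "positive_el sc st a" and ab: "cle sc st a b"
  shows "norm a \<le> norm b"
proof (rule norm_le_of_spectrum_bound)
  show "st a = a" using pa unfolding positive_el_def by simp
  fix z assume z: "norm b < cmod z"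
  show "invertible_el (a - sc z 1)"
  proof (rule ccontr)
    assume ni: "\<not> invertible_el (a - sc z 1)"
    from positive_el_spectrum[OF pa ni] have "Im z = 0" "0 \<le> Re z" by auto
    then have zl: "z = of_real (Re z)" and "cmod z = Re z" by (simp_all add: complex_eq_iff cmod_eq_Re)
    then have "invertible_el (Re z *\<^sub>R 1 - a)"
      using invertible_el_scaleR_one_minus_of_cle[OF ab] z by simp
    moreover have "Re z *\<^sub>R 1 - a = - (a - sc z 1)" by (subst zl) (simp add: sc_of_real)
    ultimately show False using ni invertible_el_minus_iff by metis
  qed
qed simp

lemma summable_norm_of_cle_power:
  assumes pos: "\<And>n. positive_el sc st (u n)"
    and le: "\<And>n. 1 \<le> n \<Longrightarrow> cle sc st (u n) (q ^ n * \<delta>)"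
    and q: "norm q < 1"
  shows "summable (\<lambda>n. norm (u n))"
proof (rule summable_comparison_test_ev)
  show "summable (\<lambda>n. norm q ^ n * norm \<delta>)" using q by (simp add: summable_mult2)
  have "norm (u n) \<le> norm q ^ n * norm \<delta>" if "1 \<le> n" for n
  proof -
    have "norm (u n) \<le> norm (q ^ n * \<delta>)" by (rule norm_mono_positive[OF pos le[OF that]])
    also have "\<dots> \<le> norm q ^ n * norm \<delta>"
      by (rule order_trans[OF norm_mult_ineq]) (simp add: mult_right_mono norm_power_ineq)
    finally show ?thesis .
  qed
  then show "eventually (\<lambda>n. norm (norm (u n)) \<le> norm q ^ n * norm \<delta>) sequentially"
    by (intro eventually_sequentiallyI[of 1]) simp
qed

end

section \<open>Orbits in norm-valued metric spaces\<close>

locale normed_metric =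
  fixes d :: "'x \<Rightarrow> 'x \<Rightarrow> 'a::real_normed_vector"
  assumes zero_iff: "d x y = 0 \<longleftrightarrow> x = y"
    and commute: "d x y = d y x"
    and norm_triangle: "norm (d x y) \<le> norm (d x z) + norm (d z y)"

lemma (in cstar_algebra) normed_metric_of_cstar_metric:
  assumes "cstar_metric sc st d"
  shows "normed_metric d"
proof
  fix x y z
  show "d x y = 0 \<longleftrightarrow> x = y" "d x y = d y x" using assms unfolding cstar_metric_def by blast+
  have "norm (d x y) \<le> norm (d x z + d z y)"
    using assms norm_mono_positive unfolding cstar_metric_def by blast
  then show "norm (d x y) \<le> norm (d x z) + norm (d z y)" using norm_triangle_ineq order_trans by blast
qed

context normed_metric
begin

lemma limit_unique:
  assumes "(\<lambda>n. norm (d (s n) u)) \<longlonglongrightarrow> 0" "(\<lambda>n. norm (d (s n) v)) \<longlonglongrightarrow> 0"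
  shows "u = v"
proof -
  have "norm (d u v) \<le> norm (d (s n) u) + norm (d (s n) v)" for n
    using norm_triangle[of u v "s n"] commute[of u "s n"] by simp
  then have "norm (d u v) \<le> 0 + 0"
    by (intro LIMSEQ_le_const[OF tendsto_add[OF assms]]) blast
  then show ?thesis using zero_iff by simp
qed

lemma Cauchy_of_summable_steps:
  assumes "summable (\<lambda>n. norm (d (t n) (t (Suc n))))"
  shows "\<forall>e>0. \<exists>N. \<forall>n\<ge>N. \<forall>m\<ge>N. norm (d (t n) (t m)) < e"
proof (intro allI impI)
  fix e :: real assume "0 < e"
  then obtain N where N: "\<And>m n. N \<le> m \<Longrightarrow> norm (\<Sum>i=m..<n. norm (d (t i) (t (Suc i)))) < e"
    using assms unfolding summable_Cauchy by blast
  have steps: "norm (d (t m) (t (m + k))) \<le> (\<Sum>i=m..<m + k. norm (d (t i) (t (Suc i))))" for m k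
  proof (induction k)
    case 0
    then show ?case using zero_iff by simp
  next
    case (Suc k)
    then show ?case using norm_triangle[of "t m" "t (m + Suc k)" "t (m + k)"] by simp
  qed
  have close: "norm (d (t m) (t n)) < e" if "N \<le> m" "m \<le> n" for m n
    using steps[of m "n - m"] N[OF that(1), of n] that(2) by (simp add: sum_nonneg)
  show "\<exists>N. \<forall>n\<ge>N. \<forall>m\<ge>N. norm (d (t n) (t m)) < e"
  proof (intro exI[of _ N] allI impI)
    fix n m assume "N \<le> n" "N \<le> m"
    then show "norm (d (t n) (t m)) < e"
      using close[of n m] close[of m n] commute[of "t n" "t m"] by (cases "n \<le> m") auto
  qed
qed

lemma fixed_point_of_orbitally_continuous:
  assumes "orbitally_continuous d T" and orbit: "(\<lambda>n. norm (d ((T ^^ n) x) u)) \<longlonglongrightarrow> 0"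
  shows "T u = u"
proof (rule limit_unique)
  have "orbitally_continuous_at d T u" using assms(1) unfolding orbitally_continuous_def by blast
  from this[unfolded orbitally_continuous_at_def, rule_format, of "\<lambda>n. n" x]
  show "(\<lambda>n. norm (d ((T ^^ (n + 1)) x) (T u))) \<longlonglongrightarrow> 0"
    using orbit by (simp add: strict_mono_def)
  show "(\<lambda>n. norm (d ((T ^^ (n + 1)) x) u)) \<longlonglongrightarrow> 0" using LIMSEQ_Suc[OF orbit] by simp
qed

lemma orbitally_continuous_of_orbits_tendsto:
  assumes orbits: "\<And>x. (\<lambda>n. norm (d ((T ^^ n) x) u)) \<longlonglongrightarrow> 0" and fixed: "T u = u"
  shows "orbitally_continuous d T"
  unfolding orbitally_continuous_def orbitally_continuous_at_def
proof (intro allI impI)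
  fix v x and ns :: "nat \<Rightarrow> nat"
  assume ns: "strict_mono ns" and v: "(\<lambda>i. norm (d ((T ^^ ns i) x) v)) \<longlonglongrightarrow> 0"
  have "strict_mono (\<lambda>i. ns i + 1)" using ns by (simp add: strict_mono_def)
  from LIMSEQ_subseq_LIMSEQ[OF orbits[of x] this]
  have "(\<lambda>i. norm (d ((T ^^ (ns i + 1)) x) u)) \<longlonglongrightarrow> 0" by (simp add: o_def)
  moreover have "v = u"
    using limit_unique[OF v] LIMSEQ_subseq_LIMSEQ[OF orbits[of x] ns] by (simp add: o_def)
  ultimately show "(\<lambda>i. norm (d ((T ^^ (ns i + 1)) x) (T v))) \<longlonglongrightarrow> 0" using fixed by simp
qed

lemma orbit_tendsto_fixed_point:
  fixes T S :: "'x \<Rightarrow> 'x"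
  assumes summable: "\<And>x y. summable (\<lambda>n. norm (d ((T ^^ n) x) ((S ^^ n) y)))" and fixed: "S u = u"
  shows "(\<lambda>n. norm (d ((T ^^ n) x) u)) \<longlonglongrightarrow> 0"
proof -
  have "(S ^^ n) u = u" for n using fixed by (induction n) simp_all
  then show ?thesis using summable_LIMSEQ_zero[OF summable[of x u]] by simp
qed

lemma orbit_converges:
  fixes T S :: "'x \<Rightarrow> 'x"
  assumes complete: "cstar_complete d"
    and summable: "\<And>x y. summable (\<lambda>n. norm (d ((T ^^ n) x) ((S ^^ n) y)))"
  obtains u where "(\<lambda>n. norm (d ((T ^^ n) x) u)) \<longlonglongrightarrow> 0"
proof -
  have "norm (d ((T ^^ Suc n) x) ((T ^^ n) x))
      \<le> norm (d ((T ^^ n) (T x)) ((S ^^ n) x)) + norm (d ((T ^^ n) x) ((S ^^ n) x))" for n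
  proof -
    have "(T ^^ Suc n) x = (T ^^ n) (T x)" by (simp only: funpow_Suc_right o_def)
    then show ?thesis
      using norm_triangle[of "(T ^^ n) (T x)" "(T ^^ n) x" "(S ^^ n) x"]
      by (simp only: commute[of "(S ^^ n) x" "(T ^^ n) x"])
  qed
  then have "summable (\<lambda>n. norm (d ((T ^^ Suc n) x) ((T ^^ n) x)))"
    by (intro summable_comparison_test'[OF summable_add[OF summable[of "T x" x] summable[of x x]]]) simp
  then have "summable (\<lambda>n. norm (d ((T ^^ n) x) ((T ^^ Suc n) x)))" by (simp add: commute)
  then have "\<forall>e>0. \<exists>N. \<forall>n\<ge>N. \<forall>m\<ge>N. norm (d ((T ^^ n) x) ((T ^^ m) x)) < e"
    by (rule Cauchy_of_summable_steps[where t = "\<lambda>n. (T ^^ n) x"])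
  then show thesis
    using complete[unfolded cstar_complete_def, rule_format, of "\<lambda>n. (T ^^ n) x"] that by blast
qed

theorem orbitally_continuous_iff_unique_common_fixed_point:
  fixes T S :: "'x \<Rightarrow> 'x"
  assumes complete: "cstar_complete d"
    and summable: "\<And>x y. summable (\<lambda>n. norm (d ((T ^^ n) x) ((S ^^ n) y)))"
  shows "(orbitally_continuous d T \<and> orbitally_continuous d S) \<longleftrightarrow> (\<exists>!u. T u = u \<and> S u = u)"
proof -
  have summable': "summable (\<lambda>n. norm (d ((S ^^ n) x) ((T ^^ n) y)))" for x y
    using summable[of y x] by (simp add: commute)
  show ?thesis
  proof
    assume continuous: "orbitally_continuous d T \<and> orbitally_continuous d S"
    fix x0 :: 'x
    obtain u where u: "(\<lambda>n. norm (d ((T ^^ n) x0) u)) \<longlonglongrightarrow> 0"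
      using orbit_converges[OF complete summable] by blast
    obtain v where v: "(\<lambda>n. norm (d ((S ^^ n) x0) v)) \<longlonglongrightarrow> 0"
      using orbit_converges[OF complete summable'] by blast
    have Tu: "T u = u" using fixed_point_of_orbitally_continuous continuous u by blast
    have Sv: "S v = v" using fixed_point_of_orbitally_continuous continuous v by blast
    have "v = u" using limit_unique[OF v orbit_tendsto_fixed_point[OF summable' Tu]] .
    with Sv have Su: "S u = u" by simp
    have "w = u" if "S w = w" for w
      using limit_unique[OF orbit_tendsto_fixed_point[OF summable that, of x0] u] .
    with Tu Su show "\<exists>!u. T u = u \<and> S u = u" by blast
  next
    assume "\<exists>!u. T u = u \<and> S u = u"
    then obtain u where Tu: "T u = u" and Su: "S u = u" by blast
    show "orbitally_continuous d T \<and> orbitally_continuous d S"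
      using orbitally_continuous_of_orbits_tendsto[OF orbit_tendsto_fixed_point[OF summable Su] Tu]
        orbitally_continuous_of_orbits_tendsto[OF orbit_tendsto_fixed_point[OF summable' Tu] Su]
      by blast
  qed
qed

end

theorem theorem3p16:
  fixes sc :: "complex \<Rightarrow> 'a::{real_normed_algebra_1,banach} \<Rightarrow> 'a"
    and st :: "'a \<Rightarrow> 'a"
    and d :: "'x \<Rightarrow> 'x \<Rightarrow> 'a"
    and T S :: "'x \<Rightarrow> 'x"
    and q \<delta> :: "'x \<Rightarrow> 'x \<Rightarrow> 'a"
  assumes alg: "unital_cstar_algebra sc st"
    and met: "cstar_metric sc st d"
    and compl: "cstar_complete d"
    and q_pos: "\<forall>x y. central_positive sc st (q x y)"
    and q_norm: "\<forall>x y. norm (q x y) < 1"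
    and delta_pos: "\<forall>x y. positive_el sc st (\<delta> x y)"
    and contr: "\<forall>x y (n::nat). n \<ge> 1 \<longrightarrow>
         cle sc st (d ((T ^^ n) x) ((S ^^ n) y)) (q x y ^ n * \<delta> x y)"
  shows "(orbitally_continuous d T \<and> orbitally_continuous d S) \<longleftrightarrow>
         (\<exists>!u. T u = u \<and> S u = u)"
proof -
  interpret cstar_algebra sc st by (rule cstar_algebra.intro[OF alg])
  interpret normed_metric d by (rule normed_metric_of_cstar_metric[OF met])
  have "summable (\<lambda>n. norm (d ((T ^^ n) x) ((S ^^ n) y)))" for x y
    using met contr q_norm unfolding cstar_metric_def
    by (intro summable_norm_of_cle_power[where q = "q x y" and \<delta> = "\<delta> x y"]) auto
  then show ?thesis by (rule orbitally_continuous_iff_unique_common_fixed_point[OF compl])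
qed

end
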